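(* Let $a,a_1,a_2,b,b_1,b_2,x,x_1,x_2$ be non-negative reals such that $x_1+x_2\le x$, $a_1+a_2\le a$, $b_1+b_2\le b$ and $x\le\min\{a,b\}$. Then $$a_1b_2+a_1x_2+b_1a_2+b_1x_2+x_1a_2+x_1b_2\le ab+x\max\{a,b\}.$$ *)

theory Defs
  imports Complex_Main
begin

end

theory Submission
  imports Defs
begin

(* The left-hand side only grows with a2, b2, x2, so the three splittings may be taken
   exact, and by symmetry b \<le> a. Expanding a b + x a then leaves
   b1 x2 + x1 b2 \<le> a1 (b1 + x1) + a2 (b2 + x2), which holds because all four of
   b1, b2, x1, x2 are at most a1 + a2, so the left side is at most
   (a1 + a2) min (b1 + x1) (b2 + x2). *)

lemma cross_products_le_mult_min:
  fixes p q r s M :: "'a::linordered_idom"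
  assumes "p \<ge> 0" "q \<ge> 0" "r \<ge> 0" "s \<ge> 0"
    and "p \<le> M" "q \<le> M" "r \<le> M" "s \<le> M"
  shows "p * s + q * r \<le> M * min (p + q) (r + s)"
proof -
  have "p * s + q * r \<le> p * M + q * M"
    using assms by (intro add_mono mult_left_mono)
  moreover have "p * s + q * r \<le> M * s + M * r"
    using assms by (intro add_mono mult_right_mono)
  ultimately show ?thesis
    by (simp add: min_def algebra_simps)
qed

lemma cross_products_le:
  fixes a1 a2 b1 b2 x1 x2 :: "'a::linordered_idom"
  assumes "a1 \<ge> 0" "a2 \<ge> 0" "b1 \<ge> 0" "b2 \<ge> 0" "x1 \<ge> 0" "x2 \<ge> 0"
    and "x1 + x2 \<le> b1 + b2" "b1 + b2 \<le> a1 + a2"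
  shows "b1 * x2 + x1 * b2 \<le> a1 * (b1 + x1) + a2 * (b2 + x2)"
proof -
  have "b1 * x2 + x1 * b2 \<le> (a1 + a2) * min (b1 + x1) (b2 + x2)"
    using assms by (intro cross_products_le_mult_min) auto
  also have "\<dots> = a1 * min (b1 + x1) (b2 + x2) + a2 * min (b1 + x1) (b2 + x2)"
    by (simp add: distrib_right)
  also have "\<dots> \<le> a1 * (b1 + x1) + a2 * (b2 + x2)"
    using assms by (intro add_mono mult_left_mono) auto
  finally show ?thesis .
qed

lemma split_products_le_of_le:
  fixes a a1 a2 b b1 b2 x x1 x2 :: "'a::linordered_idom"
  assumes "a1 \<ge> 0" "a2 \<ge> 0" "b1 \<ge> 0" "b2 \<ge> 0" "x1 \<ge> 0" "x2 \<ge> 0"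
    and "x1 + x2 \<le> x" "a1 + a2 \<le> a" "b1 + b2 \<le> b"
    and "x \<le> b" "b \<le> a"
  shows "a1 * b2 + a1 * x2 + b1 * a2 + b1 * x2 + x1 * a2 + x1 * b2 \<le> a * b + x * a"
proof -
  have "a1 * b2 + a1 * x2 + b1 * a2 + b1 * x2 + x1 * a2 + x1 * b2
      \<le> a1 * (b - b1) + a1 * (x - x1) + b1 * (a - a1) + b1 * (x - x1)
        + x1 * (a - a1) + x1 * (b - b1)"
    using assms by (intro add_mono mult_left_mono) auto
  moreover have "b1 * (x - x1) + x1 * (b - b1)
      \<le> a1 * (b1 + x1) + (a - a1) * (b - b1 + (x - x1))"
    using assms by (intro cross_products_le) auto
  ultimately show ?thesis
    by (simp add: algebra_simps)
qed

theorem lemma6p3: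
  fixes a a1 a2 b b1 b2 x x1 x2 :: real
  assumes "a \<ge> 0" "a1 \<ge> 0" "a2 \<ge> 0" "b \<ge> 0" "b1 \<ge> 0" "b2 \<ge> 0"
    "x \<ge> 0" "x1 \<ge> 0" "x2 \<ge> 0"
    and "x1 + x2 \<le> x" and "a1 + a2 \<le> a" and "b1 + b2 \<le> b"
    and "x \<le> min a b"
  shows "a1 * b2 + a1 * x2 + b1 * a2 + b1 * x2 + x1 * a2 + x1 * b2 \<le> a * b + x * max a b"
proof (cases "b \<le> a")
  case True
  then show ?thesis
    using split_products_le_of_le[of a1 a2 b1 b2 x1 x2 x a b] assms by (simp add: max_def)
next
  case False
  then show ?thesis
    using split_products_le_of_le[of b1 b2 a1 a2 x1 x2 x b a] assms
    by (simp add: max_def algebra_simps)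
qed

end
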